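(* Under the Standing setup, for any invocation $\textsc{MSSP}(I,H_I)$ occurring during the execution of $\textsc{MSSP}([0,k-1],G)$, any $i\in I$ and any vertex $u\in V(H_I)\setminus V_\infty$, there exists a path from $r_i$ to $u$ in $H_I[(V(H_I)\setminus V_\infty)\cup\{r_i\}]$.
   Context: Standing setup. $G=(V,E)$ is a planar embedded directed graph (embedding given by a rotation system, i.e. the clockwise order of edges around each vertex) with non-negative edge weights (weight $\infty$ allowed), in which shortest paths are unique. The infinite face $f_\infty$ is a simple directed cycle all of whose edges have weight $\infty$; $V_\infty=\{r_0,\dots,r_{k-1}\}$ is its vertex set in clockwise order. It is assumed that no shortest path contains an edge entering a vertex of $V_\infty$, and that for every $r_i$ and every $u\in V\setminus V_\infty$ there is a path from $r_i$ to $u$ meeting $V_\infty$ only in $r_i$. For a graph $H$, $d_H(x,y)$ is the shortest-path distance and $P_H[x,y]$ the shortest path; for a rooted tree $T$ and vertex $v$ other than the root, $\pi_T(v)$ is the parent of $v$ in $T$. Contracting an edge set $E'$ (written $H/E'$) merges each connected component of $E'$ into one vertex (identified with a designated vertex of the component), deletes self-loops, and keeps only the cheapest edge among parallel edges; the rotation system is inherited. Procedure $\textsc{MSSP}(I=[i_1,i_2],H_I)$ (initial call $\textsc{MSSP}([0,k-1],G)$; the initial call is at recursion level $0$ and calls it makes are at level $h+1$ if it is at level $h$): let $i=\lfloor (i_1+i_2)/2\rfloor$. For each $m\in\{i_1,i,i_2\}$ compute and store the shortest-path tree $T_{I,m}$ from $r_m$ in $H_I[(V(H_I)\setminus V_\infty)\cup\{r_m\}]$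 (more generally, $T_{I,m}$ denotes this tree for any $m\in I$). If $i_2-i_1\le1$, stop. Otherwise, for each $J=[j_1,j_2]\in\{[i_1,i],[i,i_2]\}$: start with $H_J:=H_I$; let $E_{shared}=E(T_{I,j_1})\cap E(T_{I,j_2})$ (a forest). For each vertex $s$ with $\pi_{T_{I,j_1}}(s)\ne\pi_{T_{I,j_2}}(s)$, let $T(s)$ be the tree rooted at $s$ consisting of every edge $(s,v)\in E_{shared}$ such that $(s,v),(s,\pi_{T_{I,j_1}}(s)),(s,\pi_{T_{I,j_2}}(s))$ are in clockwise order around $s$, together with all edges of $E_{shared}$ descending from such $v$; let $\mathcal T_J$ be the collection of these (vertex-disjoint, maximal) trees. For each $T(s)\in\mathcal T_J$: for every $u\in T(s)$ record $s_J(u):=s$ and $\delta_J(u):=d_{T(s)}(s,u)$; for every edge $(u,v)$ of $H_J$ with exactly one endpoint in $T(s)$, if $u\in T(s)$ increase its weight by $\delta_J(u)$, and if $v\in T(s)\setminus\{s\}$ set its weight to $\infty$; then contract $T(s)$ to a single vertex identified with $s$. For vertices $u$ of $H_I$ in no tree of $\mathcal T_J$, set $s_J(u):=u$, $\delta_J(u):=0$. Then call $\textsc{MSSP}(J,H_J)$. *)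

theory Defs
  imports Main "HOL-Library.Extended_Nonnegative_Real"
begin

text \<open>The rotation system is a permutation of darts; the dart
(e, True) is the end of e at its tail, (e, False) the end at its head. grot gives the
clockwise successor of a dart around its vertex.\<close>

record ('v, 'e) emb_graph =
  gV   :: "'v set"
  gE   :: "'e set"
  gtl  :: "'e \<Rightarrow> 'v"
  ghd  :: "'e \<Rightarrow> 'v"
  gw   :: "'e \<Rightarrow> ennreal"
  grot :: "'e \<times> bool \<Rightarrow> 'e \<times> bool"

fun walk :: "('e \<Rightarrow> 'v) \<Rightarrow> ('e \<Rightarrow> 'v) \<Rightarrow> 'e set \<Rightarrow> 'v set \<Rightarrow> 'v \<Rightarrow> 'e list \<Rightarrow> 'v \<Rightarrow> bool" where
  "walk ft fh A S x [] y \<longleftrightarrow> x = y \<and> x \<in> S"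
| "walk ft fh A S x (e # es) y \<longleftrightarrow> e \<in> A \<and> ft e = x \<and> x \<in> S \<and> walk ft fh A S (fh e) es y"

definition spath :: "('e \<Rightarrow> 'v) \<Rightarrow> ('e \<Rightarrow> 'v) \<Rightarrow> 'e set \<Rightarrow> 'v set \<Rightarrow> 'v \<Rightarrow> 'e list \<Rightarrow> 'v \<Rightarrow> bool" where
  "spath ft fh A S x es y \<longleftrightarrow> walk ft fh A S x es y \<and> distinct (x # map fh es)"

definition path_w :: "('e \<Rightarrow> ennreal) \<Rightarrow> 'e list \<Rightarrow> ennreal" where
  "path_w w es = sum_list (map w es)"

definition dist_on :: "('e \<Rightarrow> 'v) \<Rightarrow> ('e \<Rightarrow> 'v) \<Rightarrow> ('e \<Rightarrow> ennreal) \<Rightarrow> 'e set \<Rightarrow> 'v set \<Rightarrow> 'v \<Rightarrow> 'v \<Rightarrow> ennreal" where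
  "dist_on ft fh w A S x y = (INF es \<in> {es. spath ft fh A S x es y}. path_w w es)"

definition gpath :: "('v,'e) emb_graph \<Rightarrow> 'v set \<Rightarrow> 'v \<Rightarrow> 'e list \<Rightarrow> 'v \<Rightarrow> bool" where
  "gpath H S x es y = spath (gtl H) (ghd H) (gE H) S x es y"

definition gdist :: "('v,'e) emb_graph \<Rightarrow> 'v set \<Rightarrow> 'v \<Rightarrow> 'v \<Rightarrow> ennreal" where
  "gdist H S x y = dist_on (gtl H) (ghd H) (gw H) (gE H) S x y"

definition darts :: "('v,'e) emb_graph \<Rightarrow> ('e \<times> bool) set" where
  "darts H = gE H \<times> (UNIV :: bool set)"

definition dvert :: "('v,'e) emb_graph \<Rightarrow> 'e \<times> bool \<Rightarrow> 'v" where
  "dvert H d = (if snd d then gtl H (fst d) else ghd H (fst d))"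

definition alpha :: "'e \<times> bool \<Rightarrow> 'e \<times> bool" where
  "alpha d = (fst d, \<not> snd d)"

definition rotation_system :: "('v,'e) emb_graph \<Rightarrow> bool" where
  "rotation_system H \<longleftrightarrow>
     bij_betw (grot H) (darts H) (darts H) \<and>
     (\<forall>d\<in>darts H. dvert H (grot H d) = dvert H d) \<and>
     (\<forall>d\<in>darts H. \<forall>d'\<in>darts H. dvert H d = dvert H d' \<longrightarrow> (\<exists>n. (grot H ^^ n) d = d'))"

text \<open>Face traversal: cross the edge, then turn to the clockwise next dart
(faces lie to the left, so the outer face is traversed clockwise).\<close>
definition face_step :: "('v,'e) emb_graph \<Rightarrow> 'e \<times> bool \<Rightarrow> 'e \<times> bool" where
  "face_step H d = grot H (alpha d)"

definition face_orbit :: "('v,'e) emb_graph \<Rightarrow> 'e \<times> bool \<Rightarrow> ('e \<times> bool) set" where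
  "face_orbit H d = {(face_step H ^^ n) d | n. True}"

definition faces :: "('v,'e) emb_graph \<Rightarrow> ('e \<times> bool) set set" where
  "faces H = face_orbit H ` darts H"

definition weakly_connected :: "('v,'e) emb_graph \<Rightarrow> bool" where
  "weakly_connected H \<longleftrightarrow> (\<forall>u\<in>gV H. \<forall>v\<in>gV H.
     (u, v) \<in> (\<Union>e\<in>gE H. {(gtl H e, ghd H e), (ghd H e, gtl H e)})\<^sup>*)"

text \<open>Planar embedded (connected) graph: a genus-0 rotation system (Euler's formula).\<close>
definition planar_embedded :: "('v,'e) emb_graph \<Rightarrow> bool" where
  "planar_embedded H \<longleftrightarrow> finite (gV H) \<and> finite (gE H) \<and>
     (\<forall>e\<in>gE H. gtl H e \<in> gV H \<and> ghd H e \<in> gV H) \<and>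
     rotation_system H \<and> weakly_connected H \<and>
     card (gV H) + card (faces H) = card (gE H) + 2"

text \<open>The infinite face is a simple directed cycle (in one of the two orientations) of
infinite-weight edges, whose vertices in clockwise order are r 0, ..., r (k-1).\<close>
definition outer_face :: "('v,'e) emb_graph \<Rightarrow> (nat \<Rightarrow> 'v) \<Rightarrow> nat \<Rightarrow> bool" where
  "outer_face H r k \<longleftrightarrow> 0 < k \<and> inj_on r {..<k} \<and>
     (\<exists>(c :: nat \<Rightarrow> 'e) (fw :: bool). inj_on c {..<k} \<and>
        (\<forall>i<k. c i \<in> gE H \<and> gw H (c i) = top \<and>
           (if fw then gtl H (c i) = r i \<and> ghd H (c i) = r (Suc i mod k)
            else gtl H (c i) = r (Suc i mod k) \<and> ghd H (c i) = r i)) \<and>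
        (\<forall>i<k. face_step H (c i, fw) = (c (Suc i mod k), fw)) \<and>
        face_orbit H (c 0, fw) = (\<lambda>i. (c i, fw)) ` {..<k})"

definition cw_order :: "('d \<Rightarrow> 'd) \<Rightarrow> 'd \<Rightarrow> 'd \<Rightarrow> 'd \<Rightarrow> bool" where
  "cw_order \<sigma> a b c \<longleftrightarrow> (\<exists>i j. 0 < i \<and> i < j \<and> (\<sigma> ^^ i) a = b \<and> (\<sigma> ^^ j) a = c \<and>
      (\<forall>l. 0 < l \<and> l \<le> j \<longrightarrow> (\<sigma> ^^ l) a \<noteq> a))"

definition sp_tree :: "('v,'e) emb_graph \<Rightarrow> 'v set \<Rightarrow> 'v \<Rightarrow> 'e set \<Rightarrow> bool" where
  "sp_tree H S rt T \<longleftrightarrow> T \<subseteq> gE H \<and>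
     (\<forall>e\<in>T. gtl H e \<in> S \<and> ghd H e \<in> S \<and> ghd H e \<noteq> rt) \<and>
     (\<forall>e\<in>T. \<forall>e'\<in>T. ghd H e = ghd H e' \<longrightarrow> e = e') \<and>
     insert rt (ghd H ` T) = {y \<in> S. gdist H S rt y < top} \<and>
     (\<forall>y \<in> insert rt (ghd H ` T). \<exists>es. set es \<subseteq> T \<and> gpath H S rt es y \<and>
         path_w (gw H) es = gdist H S rt y)"

definition pedge :: "('v,'e) emb_graph \<Rightarrow> 'e set \<Rightarrow> 'v \<Rightarrow> 'e" where
  "pedge H T v = (THE e. e \<in> T \<and> ghd H e = v)"

definition tparent :: "('v,'e) emb_graph \<Rightarrow> 'e set \<Rightarrow> 'v \<Rightarrow> 'v" where
  "tparent H T v = gtl H (pedge H T v)"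

section \<open>One recursion step: building H_J from H_I and T1 = T_{I,j1}, T2 = T_{I,j2}\<close>

definition sh_roots :: "('v,'e) emb_graph \<Rightarrow> 'e set \<Rightarrow> 'e set \<Rightarrow> 'v set" where
  "sh_roots H T1 T2 = {s. s \<in> ghd H ` T1 \<and> s \<in> ghd H ` T2 \<and> tparent H T1 s \<noteq> tparent H T2 s}"

definition sh_chosen :: "('v,'e) emb_graph \<Rightarrow> 'e set \<Rightarrow> 'e set \<Rightarrow> 'v \<Rightarrow> 'e set" where
  "sh_chosen H T1 T2 s = {e \<in> T1 \<inter> T2. gtl H e = s \<and>
      cw_order (grot H) (e, True) (pedge H T1 s, False) (pedge H T2 s, False)}"

definition sh_rel :: "('v,'e) emb_graph \<Rightarrow> 'e set \<Rightarrow> ('v \<times> 'v) set" where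
  "sh_rel H A = {(gtl H e, ghd H e) | e. e \<in> A}"

definition sub_edges :: "('v,'e) emb_graph \<Rightarrow> 'e set \<Rightarrow> 'e set \<Rightarrow> 'v \<Rightarrow> 'e set" where
  "sub_edges H T1 T2 s = {e \<in> T1 \<inter> T2. \<exists>c \<in> sh_chosen H T1 T2 s.
      e = c \<or> (ghd H c, gtl H e) \<in> (sh_rel H (T1 \<inter> T2))\<^sup>*}"

definition sub_verts :: "('v,'e) emb_graph \<Rightarrow> 'e set \<Rightarrow> 'e set \<Rightarrow> 'v \<Rightarrow> 'v set" where
  "sub_verts H T1 T2 s = insert s (ghd H ` sub_edges H T1 T2 s)"

definition ctr_edges :: "('v,'e) emb_graph \<Rightarrow> 'e set \<Rightarrow> 'e set \<Rightarrow> 'e set" where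
  "ctr_edges H T1 T2 = (\<Union>s\<in>sh_roots H T1 T2. sub_edges H T1 T2 s)"

definition ctr_verts :: "('v,'e) emb_graph \<Rightarrow> 'e set \<Rightarrow> 'e set \<Rightarrow> 'v set" where
  "ctr_verts H T1 T2 = (\<Union>s\<in>sh_roots H T1 T2. sub_verts H T1 T2 s)"

definition sJ :: "('v,'e) emb_graph \<Rightarrow> 'e set \<Rightarrow> 'e set \<Rightarrow> 'v \<Rightarrow> 'v" where
  "sJ H T1 T2 u = (if u \<in> ctr_verts H T1 T2
      then (THE s. s \<in> sh_roots H T1 T2 \<and> u \<in> sub_verts H T1 T2 s) else u)"

definition deltaJ :: "('v,'e) emb_graph \<Rightarrow> 'e set \<Rightarrow> 'e set \<Rightarrow> 'v \<Rightarrow> ennreal" where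
  "deltaJ H T1 T2 u = (if u \<in> ctr_verts H T1 T2
      then dist_on (gtl H) (ghd H) (gw H) (sub_edges H T1 T2 (sJ H T1 T2 u))
             (sub_verts H T1 T2 (sJ H T1 T2 u)) (sJ H T1 T2 u) u
      else 0)"

definition wJ :: "('v,'e) emb_graph \<Rightarrow> 'e set \<Rightarrow> 'e set \<Rightarrow> 'e \<Rightarrow> ennreal" where
  "wJ H T1 T2 e = (let a = sJ H T1 T2 (gtl H e); b = sJ H T1 T2 (ghd H e) in
      if a \<noteq> b \<and> ghd H e \<in> ctr_verts H T1 T2 \<and> ghd H e \<noteq> b then top
      else if a \<noteq> b then gw H e + deltaJ H T1 T2 (gtl H e)
      else gw H e)"

definition nonloop :: "('v,'e) emb_graph \<Rightarrow> 'e set \<Rightarrow> 'e set \<Rightarrow> 'e set" where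
  "nonloop H T1 T2 = {e \<in> gE H. sJ H T1 T2 (gtl H e) \<noteq> sJ H T1 T2 (ghd H e)}"

definition keep_ok :: "('v,'e) emb_graph \<Rightarrow> 'e set \<Rightarrow> 'e set \<Rightarrow> 'e set \<Rightarrow> bool" where
  "keep_ok H T1 T2 K \<longleftrightarrow> K \<subseteq> nonloop H T1 T2 \<and>
     (\<forall>e\<in>nonloop H T1 T2. \<exists>!e'. e' \<in> K \<and>
         sJ H T1 T2 (gtl H e') = sJ H T1 T2 (gtl H e) \<and> sJ H T1 T2 (ghd H e') = sJ H T1 T2 (ghd H e)) \<and>
     (\<forall>e\<in>K. \<forall>e'\<in>nonloop H T1 T2.
         sJ H T1 T2 (gtl H e') = sJ H T1 T2 (gtl H e) \<and> sJ H T1 T2 (ghd H e') = sJ H T1 T2 (ghd H e)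
         \<longrightarrow> wJ H T1 T2 e \<le> wJ H T1 T2 e')"

text \<open>Inherited rotation: contracting the forest F (walk around it), then deleting all
edges not in K (skip their darts).\<close>
definition ctr_step :: "('v,'e) emb_graph \<Rightarrow> 'e set \<Rightarrow> 'e \<times> bool \<Rightarrow> 'e \<times> bool" where
  "ctr_step H F x = (let g = (\<lambda>y. grot H (alpha y)) in
      (g ^^ (LEAST n. (g ^^ n) (grot H x) \<notin> F \<times> UNIV)) (grot H x))"

definition ctr_rot :: "('v,'e) emb_graph \<Rightarrow> 'e set \<Rightarrow> 'e set \<Rightarrow> 'e \<times> bool \<Rightarrow> 'e \<times> bool" where
  "ctr_rot H F K d = (if d \<in> K \<times> UNIV
      then (ctr_step H F ^^ (LEAST n. 0 < n \<and> (ctr_step H F ^^ n) d \<in> K \<times> UNIV)) d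
      else d)"

definition child_graph :: "('v,'e) emb_graph \<Rightarrow> 'e set \<Rightarrow> 'e set \<Rightarrow> 'e set \<Rightarrow> ('v,'e) emb_graph" where
  "child_graph H T1 T2 K =
     \<lparr> gV = sJ H T1 T2 ` gV H, gE = K,
       gtl = (\<lambda>e. sJ H T1 T2 (gtl H e)), ghd = (\<lambda>e. sJ H T1 T2 (ghd H e)),
       gw = wJ H T1 T2, grot = ctr_rot H (ctr_edges H T1 T2) K \<rparr>"

definition Sm :: "('v,'e) emb_graph \<Rightarrow> (nat \<Rightarrow> 'v) \<Rightarrow> nat \<Rightarrow> nat \<Rightarrow> 'v set" where
  "Sm H r k m = (gV H - r ` {..<k}) \<union> {r m}"

text \<open>mssp_call r k G i1 i2 H: the invocation MSSP([i1,i2], H) occurs during the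
execution of MSSP([0,k-1], G).\<close>
inductive mssp_call :: "(nat \<Rightarrow> 'v) \<Rightarrow> nat \<Rightarrow> ('v,'e) emb_graph \<Rightarrow> nat \<Rightarrow> nat \<Rightarrow> ('v,'e) emb_graph \<Rightarrow> bool"
  for r k G where
  init: "mssp_call r k G 0 (k - 1) G"
| left: "\<lbrakk> mssp_call r k G i1 i2 H; Suc i1 < i2;
           sp_tree H (Sm H r k i1) (r i1) Ta;
           sp_tree H (Sm H r k ((i1 + i2) div 2)) (r ((i1 + i2) div 2)) Tm;
           sp_tree H (Sm H r k i2) (r i2) Tb;
           keep_ok H Ta Tm K \<rbrakk>
         \<Longrightarrow> mssp_call r k G i1 ((i1 + i2) div 2) (child_graph H Ta Tm K)"
| right: "\<lbrakk> mssp_call r k G i1 i2 H; Suc i1 < i2;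
           sp_tree H (Sm H r k i1) (r i1) Ta;
           sp_tree H (Sm H r k ((i1 + i2) div 2)) (r ((i1 + i2) div 2)) Tm;
           sp_tree H (Sm H r k i2) (r i2) Tb;
           keep_ok H Tm Tb K \<rbrakk>
         \<Longrightarrow> mssp_call r k G ((i1 + i2) div 2) i2 (child_graph H Tm Tb K)"

end

theory Submission
  imports Defs
begin

text \<open>Contracting the trees of \<open>\<T>\<^sub>J\<close> maps every vertex u to its representative \<open>s\<^sub>J(u)\<close>,
and every edge that does not become a self-loop has a parallel copy that survives in \<open>H\<^sub>J\<close>.
Hence the image of a walk in \<open>H\<^sub>I\<close> is a walk in \<open>H\<^sub>J\<close>. The contracted trees are made of
edges of shortest-path trees avoiding \<open>V\<^sub>\<infinity>\<close>, so \<open>s\<^sub>J\<close> fixes every \<open>r\<^sub>i\<close> and maps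
\<open>V(H\<^sub>I) \<setminus> V\<^sub>\<infinity>\<close> into \<open>V(H\<^sub>J) \<setminus> V\<^sub>\<infinity>\<close>: a walk from \<open>r\<^sub>i\<close> avoiding the other outer vertices
stays such a walk. Shortcutting turns walks into paths, and induction along the recursion
tree, starting from the reachability hypothesis on G, gives the claim.\<close>

lemma walk_drop:
  "walk ft fh A S x es y \<Longrightarrow> j < length es \<Longrightarrow> walk ft fh A S (fh (es ! j)) (drop (Suc j) es) y"
proof (induction es arbitrary: x j)
  case Nil
  then show ?case by simp
next
  case (Cons e es)
  then show ?case by (cases j) auto
qed

lemma walk_imp_spath:
  "walk ft fh A S x es y \<Longrightarrow> \<exists>es'. spath ft fh A S x es' y"
proof (induction es arbitrary: x)
  case Nil
  then show ?case unfolding spath_def by (intro exI[of _ "[]"]) auto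
next
  case (Cons e es)
  then have e: "e \<in> A" "ft e = x" "x \<in> S" and "walk ft fh A S (fh e) es y" by auto
  then obtain p where p: "spath ft fh A S (fh e) p y" using Cons.IH by blast
  then have pw: "walk ft fh A S (fh e) p y" and pd: "distinct (fh e # map fh p)"
    unfolding spath_def by auto
  consider "x \<notin> set (fh e # map fh p)" | "x = fh e" | j where "j < length p" "fh (p ! j) = x"
    using in_set_conv_nth[of x "map fh p"] by auto
  then show ?case
  proof cases
    case 1
    then have "spath ft fh A S x (e # p) y" unfolding spath_def using e pw pd by auto
    then show ?thesis by blast
  next
    case 2
    then show ?thesis using p by blast
  next
    case (3 j)
    \<comment> \<open>x reoccurs on the path: cut off the loop in front of its later occurrence\<close>
    have "walk ft fh A S x (drop (Suc j) p) y" using walk_drop[OF pw 3(1)] 3 by simp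
    moreover have "x # map fh (drop (Suc j) p) = drop j (map fh p)"
      using 3 by (simp add: Cons_nth_drop_Suc[symmetric] drop_map)
    moreover have "distinct (drop j (map fh p))" using pd by (simp add: distinct_drop)
    ultimately have "spath ft fh A S x (drop (Suc j) p) y" unfolding spath_def by simp
    then show ?thesis by blast
  qed
qed

lemma walk_image:
  assumes "walk ft fh A S x es y"
    and vertices: "\<forall>z\<in>S. f z \<in> S'"
    and edges: "\<forall>e\<in>A. f (ft e) \<noteq> f (fh e) \<longrightarrow> (\<exists>e'\<in>A'. ft' e' = f (ft e) \<and> fh' e' = f (fh e))"
  shows "\<exists>es'. walk ft' fh' A' S' (f x) es' (f y)"
  using assms(1)
proof (induction es arbitrary: x)
  case Nil
  then show ?case using vertices by (intro exI[of _ "[]"]) auto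
next
  case (Cons e es)
  then have e: "e \<in> A" "ft e = x" "x \<in> S" and "walk ft fh A S (fh e) es y" by auto
  then obtain es' where w: "walk ft' fh' A' S' (f (fh e)) es' (f y)" using Cons.IH by blast
  show ?case
  proof (cases "f x = f (fh e)")
    case True
    then show ?thesis using w by metis
  next
    case False
    then obtain e' where "e' \<in> A'" "ft' e' = f x" "fh' e' = f (fh e)" using edges e by metis
    then have "walk ft' fh' A' S' (f x) (e' # es') (f y)" using w e vertices by auto
    then show ?thesis by blast
  qed
qed

lemma sp_tree_heads_inj:
  "sp_tree H S rt T \<Longrightarrow> \<forall>e\<in>T. \<forall>e'\<in>T. ghd H e = ghd H e' \<longrightarrow> e = e'"
  unfolding sp_tree_def by auto

lemma sp_tree_heads_inner:
  "sp_tree H (Sm H r k m) (r m) T \<Longrightarrow> ghd H ` T \<subseteq> gV H - r ` {..<k}"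
  unfolding sp_tree_def Sm_def by auto

lemma single_valued_converse_sh_rel:
  assumes "\<forall>e\<in>T. \<forall>e'\<in>T. ghd H e = ghd H e' \<longrightarrow> e = e'" and "F \<subseteq> T"
  shows "single_valued ((sh_rel H F)\<inverse>)"
  using assms unfolding single_valued_def sh_rel_def by blast

lemma sub_verts_rtrancl:
  "v \<in> sub_verts H T1 T2 s \<Longrightarrow> (s, v) \<in> (sh_rel H (T1 \<inter> T2))\<^sup>*"
proof (cases "v = s")
  case False
  let ?R = "sh_rel H (T1 \<inter> T2)"
  assume "v \<in> sub_verts H T1 T2 s"
  then obtain e c where e: "e \<in> T1 \<inter> T2" "v = ghd H e"
    and c: "c \<in> sh_chosen H T1 T2 s" "e = c \<or> (ghd H c, gtl H e) \<in> ?R\<^sup>*"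
    using False unfolding sub_verts_def sub_edges_def by auto
  have "(s, ghd H c) \<in> ?R" "(gtl H e, ghd H e) \<in> ?R"
    using c(1) e(1) unfolding sh_chosen_def sh_rel_def by auto
  then show ?thesis using c(2) e(2) by (meson converse_rtrancl_into_rtrancl r_into_rtrancl rtrancl_trans)
qed simp

lemma sh_roots_not_shared_head:
  assumes "\<forall>e\<in>T1. \<forall>e'\<in>T1. ghd H e = ghd H e' \<longrightarrow> e = e'"
    and "\<forall>e\<in>T2. \<forall>e'\<in>T2. ghd H e = ghd H e' \<longrightarrow> e = e'"
    and s: "s \<in> sh_roots H T1 T2"
  shows "(a, s) \<notin> (sh_rel H (T1 \<inter> T2))\<^sup>+"
proof
  assume "(a, s) \<in> (sh_rel H (T1 \<inter> T2))\<^sup>+"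
  then obtain f where f: "f \<in> T1 \<inter> T2" "ghd H f = s"
    by (auto elim: tranclE simp: sh_rel_def)
  then have "pedge H T1 s = f" "pedge H T2 s = f"
    using assms(1,2) unfolding pedge_def by (auto intro!: the_equality)
  then show False using s unfolding sh_roots_def tparent_def by auto
qed

text \<open>The trees \<open>T(s)\<close> are disjoint: \<open>T\<^sub>1 \<inter> T\<^sub>2\<close> is a forest, so two roots reaching a common
vertex are comparable, and no root is the head of a shared edge.\<close>

lemma sub_verts_root_unique:
  assumes inj1: "\<forall>e\<in>T1. \<forall>e'\<in>T1. ghd H e = ghd H e' \<longrightarrow> e = e'"
    and inj2: "\<forall>e\<in>T2. \<forall>e'\<in>T2. ghd H e = ghd H e' \<longrightarrow> e = e'"
    and s: "s \<in> sh_roots H T1 T2" and s': "s' \<in> sh_roots H T1 T2"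
    and v: "v \<in> sub_verts H T1 T2 s" "v \<in> sub_verts H T1 T2 s'"
  shows "s = s'"
proof -
  let ?R = "sh_rel H (T1 \<inter> T2)"
  have "(v, s) \<in> (?R\<inverse>)\<^sup>*" "(v, s') \<in> (?R\<inverse>)\<^sup>*"
    using sub_verts_rtrancl[OF v(1)] sub_verts_rtrancl[OF v(2)] by (auto simp: rtrancl_converse)
  then have "(s, s') \<in> ?R\<^sup>* \<or> (s', s) \<in> ?R\<^sup>*"
    using single_valued_confluent single_valued_converse_sh_rel[OF inj1 Int_lower1]
    by (fastforce simp: rtrancl_converse)
  then show ?thesis
    using sh_roots_not_shared_head[OF inj1 inj2] s s' by (auto simp: rtrancl_eq_or_trancl)
qed

lemma ctr_verts_subset_heads: "ctr_verts H T1 T2 \<subseteq> ghd H ` T1"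
  unfolding ctr_verts_def sub_verts_def sub_edges_def sh_roots_def by auto

lemma sJ_ctr_verts_heads:
  assumes "\<forall>e\<in>T1. \<forall>e'\<in>T1. ghd H e = ghd H e' \<longrightarrow> e = e'"
    and "\<forall>e\<in>T2. \<forall>e'\<in>T2. ghd H e = ghd H e' \<longrightarrow> e = e'"
    and v: "v \<in> ctr_verts H T1 T2"
  shows "sJ H T1 T2 v \<in> ghd H ` T1"
proof -
  obtain s where s: "s \<in> sh_roots H T1 T2" "v \<in> sub_verts H T1 T2 s"
    using v unfolding ctr_verts_def by auto
  then have "sJ H T1 T2 v = s"
    using v sub_verts_root_unique[OF assms(1,2)] unfolding sJ_def by (auto intro!: the_equality)
  then show ?thesis using s(1) unfolding sh_roots_def by auto
qed

lemma child_graph_reach: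
  assumes reach: "\<forall>u\<in>gV H - r ` {..<k}. \<exists>es. gpath H ((gV H - r ` {..<k}) \<union> {r i}) (r i) es u"
    and sp1: "sp_tree H (Sm H r k a) (r a) T1" and sp2: "sp_tree H (Sm H r k b) (r b) T2"
    and K: "keep_ok H T1 T2 K" and i: "i < k"
    and u: "u \<in> gV (child_graph H T1 T2 K) - r ` {..<k}"
  shows "\<exists>es. gpath (child_graph H T1 T2 K)
           ((gV (child_graph H T1 T2 K) - r ` {..<k}) \<union> {r i}) (r i) es u"
proof -
  let ?R = "r ` {..<k}" and ?f = "sJ H T1 T2" and ?H' = "child_graph H T1 T2 K"
  have ctr_inner: "ctr_verts H T1 T2 \<subseteq> gV H - ?R"
    by (rule order_trans[OF ctr_verts_subset_heads sp_tree_heads_inner[OF sp1]])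
  have fixes_R: "?f x = x" if "x \<in> ?R" for x
    using that ctr_inner unfolding sJ_def by auto
  have inner: "?f x \<notin> ?R" if x: "x \<in> gV H - ?R" for x
  proof (cases "x \<in> ctr_verts H T1 T2")
    case True
    then have "?f x \<in> ghd H ` T1"
      by (rule sJ_ctr_verts_heads[OF sp_tree_heads_inj[OF sp1] sp_tree_heads_inj[OF sp2]])
    then show ?thesis using sp_tree_heads_inner[OF sp1] by blast
  next
    case False
    then show ?thesis using x unfolding sJ_def by simp
  qed
  obtain v where v: "v \<in> gV H" "u = ?f v" using u by (auto simp: child_graph_def)
  then have "v \<notin> ?R" using fixes_R u by auto
  then obtain es where "gpath H ((gV H - ?R) \<union> {r i}) (r i) es v" using reach v by blast
  then have w: "walk (gtl H) (ghd H) (gE H) ((gV H - ?R) \<union> {r i}) (r i) es v"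
    unfolding gpath_def spath_def by auto
  have vertices: "\<forall>z\<in>(gV H - ?R) \<union> {r i}. ?f z \<in> (?f ` gV H - ?R) \<union> {r i}"
    using fixes_R inner i by auto
  have edges: "\<forall>e\<in>gE H. ?f (gtl H e) \<noteq> ?f (ghd H e) \<longrightarrow>
      (\<exists>e'\<in>K. ?f (gtl H e') = ?f (gtl H e) \<and> ?f (ghd H e') = ?f (ghd H e))"
  proof (intro ballI impI)
    fix e assume "e \<in> gE H" "?f (gtl H e) \<noteq> ?f (ghd H e)"
    then have "e \<in> nonloop H T1 T2" unfolding nonloop_def by simp
    then show "\<exists>e'\<in>K. ?f (gtl H e') = ?f (gtl H e) \<and> ?f (ghd H e') = ?f (ghd H e)"
      using K unfolding keep_ok_def by blast
  qed
  obtain es' where "walk (\<lambda>e. ?f (gtl H e)) (\<lambda>e. ?f (ghd H e)) K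
      ((?f ` gV H - ?R) \<union> {r i}) (?f (r i)) es' (?f v)"
    using walk_image[OF w vertices edges] by blast
  then have "walk (gtl ?H') (ghd ?H') (gE ?H') ((gV ?H' - ?R) \<union> {r i}) (r i) es' u"
    using v fixes_R i by (simp add: child_graph_def)
  then show ?thesis unfolding gpath_def by (rule walk_imp_spath)
qed

lemma mssp_call_reach:
  assumes "mssp_call r k G i1 i2 H" and "0 < k"
    and reach: "\<forall>j<k. \<forall>v\<in>gV G - r ` {..<k}.
          \<exists>es. gpath G ((gV G - r ` {..<k}) \<union> {r j}) (r j) es v"
  shows "i2 < k \<and> (\<forall>i\<in>{i1..i2}. \<forall>u\<in>gV H - r ` {..<k}.
           \<exists>es. gpath H ((gV H - r ` {..<k}) \<union> {r i}) (r i) es u)"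
  using assms(1)
proof (induction rule: mssp_call.induct)
  case init
  then show ?case using \<open>0 < k\<close> reach by auto
next
  case (left i1 i2 H Ta Tm Tb K)
  have "(i1 + i2) div 2 \<le> i2" using left.hyps(2) by simp
  then show ?case using left child_graph_reach[OF _ left.hyps(3,4,6)] by auto
next
  case (right i1 i2 H Ta Tm Tb K)
  have "i1 \<le> (i1 + i2) div 2" using right.hyps(2) by simp
  then show ?case using right child_graph_reach[OF _ right.hyps(4,5,6)] by auto
qed

theorem claim2:
  fixes G :: "('v, 'e) emb_graph" and r :: "nat \<Rightarrow> 'v" and k :: nat
    and H :: "('v, 'e) emb_graph" and i1 i2 i :: nat and u :: 'v
  assumes planar: "planar_embedded G"
    and outer: "outer_face G r k"
    and unique_sp: "\<forall>x\<in>gV G. \<forall>y\<in>gV G. gdist G (gV G) x y < top \<longrightarrow>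
          (\<exists>!es. gpath G (gV G) x es y \<and> path_w (gw G) es = gdist G (gV G) x y)"
    and no_enter: "\<forall>x y es. gpath G (gV G) x es y \<and> path_w (gw G) es = gdist G (gV G) x y
          \<and> gdist G (gV G) x y < top \<longrightarrow> (\<forall>e\<in>set es. ghd G e \<notin> r ` {..<k})"
    and reach: "\<forall>j<k. \<forall>v\<in>gV G - r ` {..<k}.
          \<exists>es. gpath G ((gV G - r ` {..<k}) \<union> {r j}) (r j) es v"
    and call: "mssp_call r k G i1 i2 H"
    and i_in: "i \<in> {i1..i2}"
    and u_in: "u \<in> gV H - r ` {..<k}"
  shows "\<exists>es. gpath H ((gV H - r ` {..<k}) \<union> {r i}) (r i) es u"
proof -
  have "0 < k" using outer unfolding outer_face_def by auto
  then show ?thesis using mssp_call_reach[OF call _ reach] i_in u_in by blast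
qed

end
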